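(* Let $(Y_{i\,j})_{i,j\in\mathbb N}$ be i.i.d. real random variables with $\mathbb E[Y_{1\,1}]=0$, $\mathbb E[Y_{1\,1}^2]=1$, let $l_1,l_2\in\mathbb N$, $l:=l_1+l_2$, assume $\mathbb E[Y_{1\,1}^{2l}]<\infty$, and set $\alpha=\mathbb E[Y_{1\,1}^4]$. Let $V_l\subset\mathbb N$ with $\#V_l=l$, and let $\mathbf i,\mathbf k\in V_l^{l_1}$, $\mathbf j,\mathbf m\in V_l^{l_2}$ with $\#(\{\mathbf i\}\cup\{\mathbf k\}\cup\{\mathbf j\}\cup\{\mathbf m\})\ge l$. Define $W_{\mathbf i,\mathbf k,\mathbf j,\mathbf m}=\mathbb E[(Y_{i_1 k_1}Y_{i_2 k_1})\cdots(Y_{i_{l_1} k_{l_1}}Y_{i_1 k_{l_1}})\cdot(Y_{j_1 m_1}Y_{j_2 m_1})\cdots(Y_{j_{l_2} m_{l_2}}Y_{j_1 m_{l_2}})]$, $W_{\mathbf i,\mathbf k}=\mathbb E[(Y_{i_1 k_1}Y_{i_2 k_1})\cdots(Y_{i_{l_1} k_{l_1}}Y_{i_1 k_{l_1}})]$ and $W_{\mathbf j,\mathbf m}=\mathbb E[(Y_{j_1 m_1}Y_{j_2 m_1})\cdots(Y_{j_{l_2} m_{l_2}}Y_{j_1 m_{l_2}})]$. Then $$W_{\mathbf i,\mathbf k,\mathbf j,\mathbf m}-W_{\mathbf i,\mathbf k}W_{\mathbf j,\mathbf m}=\begin{cases}0,&\text{if }\#(\{\mathbf i\}\cup\{\mathbf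 k\}\cup\{\mathbf j\}\cup\{\mathbf m\})>l,\\ \alpha-1,&\text{if }\operatorname S((G_{\langle\mathbf i,\mathbf k\rangle},G_{\langle\mathbf j,\mathbf m\rangle}))\in\operatorname{Double\text{-}2\text{-}d\text{-}Ring}_2,\\1,&\text{if }\operatorname S((G_{\langle\mathbf i,\mathbf k\rangle},G_{\langle\mathbf j,\mathbf m\rangle}))\in\operatorname{Double\text{-}1\text{-}d\text{-}Ring}_{l_0}\text{ for some even }l_0\ge4,\\1,&\text{if }\operatorname S((G_{\langle\mathbf i,\mathbf k\rangle},G_{\langle\mathbf j,\mathbf m\rangle}))\in\operatorname{Double\text{-}2\text{-}d\text{-}Ring}_{l_0}\text{ for some even }l_0\ge4,\\0,&\text{otherwise.}\end{cases}$$
   Context: Vertices are positive integers with their natural order. $\{\mathbf i\}$ is the set of entries of a sequence $\mathbf i$; $\langle\mathbf i,\mathbf k\rangle=(i_1,k_1,\dots,i_{l_1},k_{l_1})$. For a sequence $\mathbf i=(i_1,\dots,i_N)$ of vertices, $G_{\mathbf i}$ is the directed multigraph with edges $1,\dots,N$ (own identity; loops/parallel edges allowed), edge $k<N$ from $i_k$ to $i_{k+1}$, edge $N$ from $i_N$ to $i_1$; its visited vertices are the entries of $\mathbf i$. Balanced leaf of $G_{\mathbf i}$ (only if $N>2$): a vertex $v$ occurring exactly once in $\mathbf i$, say $i_t=v$, with equal cyclic neighbours $i_{t-1}=i_{t+1}$ (indices mod $N$); removing it means deleting positions $t,t+1$ if $t<N$ and positions $N-1,N$ if $t=N$. A double-circuit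 multigraph is a pair $(G_{\mathbf i_1},G_{\mathbf i_2})$ of such graphs, viewed as one combined multigraph with the disjoint union of both edge sets. A balanced leaf of the pair is a vertex that is a balanced leaf of one of $G_{\mathbf i_1},G_{\mathbf i_2}$ and does not occur in the other sequence. The seed graph $\operatorname S((G_{\mathbf i_1},G_{\mathbf i_2}))$ is obtained by repeatedly removing the smallest balanced leaf of the pair (from the graph containing it) until no balanced leaf remains. Double ring types: let $l_0$ be even, $\#V=l_0$, and $\mathbf i_1,\mathbf i_2\in V^{l_0}$ each containing every vertex of $V$ exactly once, with the first entry of $\mathbf i_2$ occurring in $\mathbf i_1$ at an odd position. The pair $(G_{\mathbf i_1},G_{\mathbf i_2})$ lies in $\operatorname{Double\text{-}1\text{-}d\text{-}Ring}_{l_0}$ (only for $l_0\ge4$) if $\mathbf i_2$ is a cyclic shift of $\mathbf i_1$, and in $\operatorname{Double\text{-}2\text{-}d\text{-}Ring}_{l_0}$ if the reversed sequence $((\mathbf i_2)_{l_0},\dots,(\mathbf i_2)_1)$ is a cyclic shift of $\mathbf i_1$. (E.g. $\operatorname{Double\text{-}2\text{-}d\text{-}Ring}_2$ consists of the pairs $(G_{(v,w)},G_{(v,w)})$, $v\neq w$.) *)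

theory Defs
  imports "HOL-Probability.Probability"
begin

text \<open>A sequence of vertices (i_1,...,i_N) is represented by a list; the circuit
  multigraph G_i is determined by it.  Positions below are 0-based.\<close>

definition interleave :: "nat list \<Rightarrow> nat list \<Rightarrow> nat list" where
  "interleave xs ys = concat (map (\<lambda>(a,b). [a,b]) (zip xs ys))"

definition bal_leaf :: "nat list \<Rightarrow> nat \<Rightarrow> bool" where
  "bal_leaf xs v \<longleftrightarrow> length xs > 2 \<and> count_list xs v = 1 \<and>
     (\<exists>t < length xs. xs ! t = v \<and>
        xs ! ((t + length xs - 1) mod length xs) = xs ! ((t + 1) mod length xs))"

definition remove_leaf :: "nat list \<Rightarrow> nat \<Rightarrow> nat list" where
  "remove_leaf xs v = (let t = (THE t. t < length xs \<and> xs ! t = v) in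
     if t + 1 < length xs then take t xs @ drop (t + 2) xs
     else take (length xs - 2) xs)"

lemma length_remove_leaf_less:
  assumes "length xs > 2" shows "length (remove_leaf xs v) < length xs"
  using assms by (auto simp: remove_leaf_def Let_def)

definition pair_leaf :: "nat list \<times> nat list \<Rightarrow> nat \<Rightarrow> bool" where
  "pair_leaf p v \<longleftrightarrow> (bal_leaf (fst p) v \<and> v \<notin> set (snd p)) \<or>
                     (bal_leaf (snd p) v \<and> v \<notin> set (fst p))"

function seed :: "nat list \<times> nat list \<Rightarrow> nat list \<times> nat list" where
  "seed p = (if \<exists>v. pair_leaf p v then
     (let v = (LEAST v. pair_leaf p v) in
       if bal_leaf (fst p) v \<and> v \<notin> set (snd p)
       then seed (remove_leaf (fst p) v, snd p)
       else seed (fst p, remove_leaf (snd p) v))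
     else p)"
  by pat_completeness auto
termination
proof (relation "Wellfounded.measure (\<lambda>p. length (fst p) + length (snd p))")
  show "wf (Wellfounded.measure (\<lambda>p. length (fst p) + length (snd p)))" by simp
next
  fix p :: "nat list \<times> nat list" and v
  assume "\<exists>v. pair_leaf p v" "v = (LEAST v. pair_leaf p v)"
    "bal_leaf (fst p) v \<and> v \<notin> set (snd p)"
  then show "((remove_leaf (fst p) v, snd p), p) \<in> Wellfounded.measure (\<lambda>p. length (fst p) + length (snd p))"
    using length_remove_leaf_less by (auto simp: bal_leaf_def)
next
  fix p :: "nat list \<times> nat list" and v
  assume a: "\<exists>v. pair_leaf p v" "v = (LEAST v. pair_leaf p v)"
    "\<not> (bal_leaf (fst p) v \<and> v \<notin> set (snd p))"
  then have "pair_leaf p v" by (metis LeastI)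
  with a have "bal_leaf (snd p) v" by (auto simp: pair_leaf_def)
  then show "((fst p, remove_leaf (snd p) v), p) \<in> Wellfounded.measure (\<lambda>p. length (fst p) + length (snd p))"
    using length_remove_leaf_less by (auto simp: bal_leaf_def)
qed

definition ring_base :: "nat \<Rightarrow> nat list \<times> nat list \<Rightarrow> bool" where
  "ring_base l0 p \<longleftrightarrow> even l0 \<and> length (fst p) = l0 \<and> length (snd p) = l0 \<and>
     distinct (fst p) \<and> distinct (snd p) \<and> set (fst p) = set (snd p) \<and>
     (\<exists>t < l0. fst p ! t = snd p ! 0 \<and> even t)"
  (* 0-based even position = 1-based odd position *)

definition double_1_ring :: "nat \<Rightarrow> nat list \<times> nat list \<Rightarrow> bool" where
  "double_1_ring l0 p \<longleftrightarrow> l0 \<ge> 4 \<and> ring_base l0 p \<and> (\<exists>n. snd p = rotate n (fst p))"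

definition double_2_ring :: "nat \<Rightarrow> nat list \<times> nat list \<Rightarrow> bool" where
  "double_2_ring l0 p \<longleftrightarrow> ring_base l0 p \<and> (\<exists>n. rev (snd p) = rotate n (fst p))"

definition cyc_prod :: "(nat \<Rightarrow> nat \<Rightarrow> 'a \<Rightarrow> real) \<Rightarrow> nat list \<Rightarrow> nat list \<Rightarrow> 'a \<Rightarrow> real" where
  "cyc_prod Y xs ks \<omega> = (\<Prod>a<length xs. Y (xs ! a) (ks ! a) \<omega> *
                                       Y (xs ! ((a + 1) mod length xs)) (ks ! a) \<omega>)"

end

theory Submission
  imports Defs
begin

text \<open>Each closed walk is encoded by the multiset of matrix entries it traverses. By
  independence and identical distribution, the expectation of a product of entries is the
  product of the moments \<mu>_n = E[Y^n] over the distinct entries, n being the multiplicity,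
  so the covariance only depends on the two edge multisets. Since \<mu>_1 = 0 and \<mu>_2 = 1,
  removing a balanced leaf deletes an edge traversed twice and by no other walk, which
  changes neither term; hence one may pass to the seed graph. There, if some edge is
  traversed once both terms vanish, and if the walks share no edge the product
  factorises. Otherwise all edges are doubled, and since the walks take 2l steps on l
  vertices, every vertex is visited exactly twice; as there is no leaf, each vertex is
  visited once by each walk with the same two neighbours, and following the walks from a
  common edge shows that they run around one ring, in the same or in opposite
  directions. Then each edge is traversed once by each walk, so the first term is a
  product of second moments and the second one vanishes, giving 1; on the ring of length
  2 the single edge is traversed four times, giving \<mu>_4 - 1.\<close>

section \<open>Closed walks and their edges\<close>

definition cnth :: "'a list \<Rightarrow> int \<Rightarrow> 'a" where
  "cnth w z = w ! nat (z mod int (length w))"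

lemma cnth_mod [simp]: "cnth w (z mod int (length w)) = cnth w z"
  by (simp add: cnth_def)

lemma cnth_cong: "z mod int (length w) = y mod int (length w) \<Longrightarrow> cnth w z = cnth w y"
  by (simp add: cnth_def)

lemma cnth_add_length [simp]: "cnth w (z + int (length w)) = cnth w z"
  by (rule cnth_cong) simp

lemma cnth_of_nat: "cnth w (int q) = w ! (q mod length w)"
  by (simp add: cnth_def flip: of_nat_mod)

lemma cnth_of_nat_less: "t < length w \<Longrightarrow> cnth w (int t) = w ! t"
  by (simp add: cnth_of_nat)

lemma cnth_in_set: "w \<noteq> [] \<Longrightarrow> cnth w z \<in> set w"
  by (simp add: cnth_def nat_less_iff)

lemma cnth_in_window:
  assumes "x \<in> set w"
  obtains z where "s \<le> z" "z < s + int (length w)" "cnth w z = x"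
proof -
  obtain q where q: "q < length w" "w ! q = x" using assms by (auto simp: in_set_conv_nth)
  define z where "z = s + (int q - s) mod int (length w)"
  have "0 < int (length w)" using q by linarith
  then have "s \<le> z" "z < s + int (length w)" by (simp_all add: z_def)
  moreover have "cnth w z = cnth w (int q)"
    by (rule cnth_cong) (simp add: z_def mod_add_right_eq)
  ultimately show thesis using q that by (simp add: cnth_of_nat_less)
qed

lemma cnth_rotate:
  assumes "w \<noteq> []"
  shows "cnth (rotate n w) z = cnth w (z + int n)"
proof -
  define q where "q = nat (z mod int (length w))"
  have q: "q < length w" "int q = z mod int (length w)"
    using assms by (auto simp: q_def nat_less_iff)
  have "cnth (rotate n w) z = w ! ((n + q) mod length w)"
    using q by (simp add: cnth_def q_def nth_rotate)
  also have "\<dots> = cnth w (int (n + q))" by (simp only: cnth_of_nat)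
  also have "\<dots> = cnth w (z + int n)"
    by (rule cnth_cong) (simp add: q(2) mod_add_right_eq add.commute)
  finally show ?thesis .
qed

lemma cnth_rev:
  assumes "w \<noteq> []"
  shows "cnth (rev w) z = cnth w (- 1 - z)"
proof -
  define q where "q = nat (z mod int (length w))"
  have q: "q < length w" "int q = z mod int (length w)"
    using assms by (auto simp: q_def nat_less_iff)
  have "cnth (rev w) z = w ! (length w - Suc q)"
    using q by (simp add: cnth_def q_def rev_nth)
  also have "\<dots> = cnth w (int (length w - Suc q))"
    using q by (intro cnth_of_nat_less[symmetric]) simp
  also have "int (length w - Suc q) = (- 1 - z mod int (length w)) + int (length w)"
    using q by (simp add: of_nat_diff)
  also have "cnth w \<dots> = cnth w (- 1 - z)"
    by (rule cnth_cong) (simp add: mod_diff_right_eq)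
  finally show ?thesis .
qed

text \<open>For a closed walk w = interleave i k, the steps at even positions go from the row
  index i_a to the column index k_a and those at odd positions from k_a back to i_(a+1);
  step_edge records the matrix entry (row, column) traversed by each step.\<close>

definition step_edge :: "'a list \<Rightarrow> int \<Rightarrow> 'a \<times> 'a" where
  "step_edge w z = (if even z then (cnth w z, cnth w (z + 1)) else (cnth w (z + 1), cnth w z))"

definition walk_edges :: "'a list \<Rightarrow> ('a \<times> 'a) multiset" where
  "walk_edges w = mset (map (\<lambda>q. step_edge w (int q)) [0..<length w])"

lemma even_mod_length: "even (length w) \<Longrightarrow> even (z mod int (length w)) \<longleftrightarrow> even z"
  by (simp add: dvd_mod_iff)

lemma step_edge_mod:
  assumes "even (length w)"
  shows "step_edge w (z mod int (length w)) = step_edge w z"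
proof -
  have "cnth w (z mod int (length w) + 1) = cnth w (z + 1)"
    by (rule cnth_cong) (simp add: mod_add_left_eq)
  then show ?thesis using even_mod_length[OF assms] by (simp add: step_edge_def)
qed

lemma step_edge_add_length [simp]:
  "even (length w) \<Longrightarrow> step_edge w (z + int (length w)) = step_edge w z"
  by (metis mod_add_self2 step_edge_mod)

lemma mset_rotate: "mset (rotate n xs) = mset xs"
  by (metis append_take_drop_id mset_append rotate_drop_take union_commute)

lemma walk_edges_window:
  assumes "even (length w)"
  shows "walk_edges w = mset (map (\<lambda>q. step_edge w (s + int q)) [0..<length w])"
proof -
  define n where "n = nat (s mod int (length w))"
  have "map (\<lambda>q. step_edge w (s + int q)) [0..<length w]
      = rotate n (map (\<lambda>q. step_edge w (int q)) [0..<length w])"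
  proof (rule nth_equalityI)
    fix q assume "q < length (map (\<lambda>q. step_edge w (s + int q)) [0..<length w])"
    then have q: "q < length w" by simp
    then have "0 < int (length w)" by linarith
    then have "int (n + q) mod int (length w) = (s + int q) mod int (length w)"
      by (simp add: n_def mod_add_left_eq)
    then have "step_edge w (int ((n + q) mod length w)) = step_edge w (s + int q)"
      using assms by (metis of_nat_mod step_edge_mod)
    moreover have "(n + q) mod length w < length w"
      using q by (metis mod_less_divisor not_gr_zero not_less_zero)
    ultimately show "map (\<lambda>q. step_edge w (s + int q)) [0..<length w] ! q
        = rotate n (map (\<lambda>q. step_edge w (int q)) [0..<length w]) ! q"
      using q by (simp add: nth_rotate)
  qed simp
  then show ?thesis by (simp add: walk_edges_def mset_rotate)
qed

lemma walk_edges_window_rev: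
  assumes "even (length w)"
  shows "walk_edges w = mset (map (\<lambda>q. step_edge w (c - 1 - int q)) [0..<length w])"
proof -
  have "map (\<lambda>q. step_edge w (c - 1 - int q)) [0..<length w]
      = rev (map (\<lambda>q. step_edge w (c - int (length w) + int q)) [0..<length w])"
    by (rule nth_equalityI) (auto simp: rev_nth of_nat_diff intro!: arg_cong[where f = "step_edge w"])
  then show ?thesis by (simp add: walk_edges_window[OF assms, of "c - int (length w)"])
qed

lemma size_walk_edges [simp]: "size (walk_edges w) = length w"
  by (simp add: walk_edges_def)

lemma walk_edges_eq_empty_iff [simp]: "walk_edges w = {#} \<longleftrightarrow> w = []"
  by (metis length_0_conv size_eq_0_iff_empty size_walk_edges)

lemma walk_edges_vertices: "e \<in># walk_edges w \<Longrightarrow> fst e \<in> set w \<and> snd e \<in> set w"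
  by (auto simp: walk_edges_def step_edge_def intro!: cnth_in_set split: if_splits)

lemma walk_edges_two: "walk_edges [a, b] = {#(a, b), (a, b)#}"
  by (simp add: walk_edges_def step_edge_def cnth_def upt_rec)

lemma walk_edges_rotate:
  assumes "even (length w)" "even n"
  shows "walk_edges (rotate n w) = walk_edges w"
proof (cases "w = []")
  case False
  then have "step_edge (rotate n w) (int q) = step_edge w (int n + int q)" for q
    using assms(2) by (simp add: step_edge_def cnth_rotate ac_simps)
  then show ?thesis
    unfolding walk_edges_window[OF assms(1), of "int n"] by (simp add: walk_edges_def)
qed simp

lemma walk_edges_rev_rotate:
  assumes "even (length w)" "odd n"
  shows "walk_edges (rev (rotate n w)) = walk_edges w"
proof (cases "w = []")
  case False
  then have "cnth (rev (rotate n w)) z = cnth w (int n - 1 - z)" for z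
    by (simp add: cnth_rev cnth_rotate algebra_simps)
  then have "step_edge (rev (rotate n w)) (int q) = step_edge w (int n - 1 - 1 - int q)" for q
    using assms(2) by (simp add: step_edge_def algebra_simps)
  then show ?thesis
    unfolding walk_edges_window_rev[OF assms(1), of "int n - 1"] by (simp add: walk_edges_def)
qed simp

definition position :: "'a list \<Rightarrow> 'a \<Rightarrow> nat" where
  "position w v = (THE t. t < length w \<and> w ! t = v)"

lemma count_list_eq_1_nth_unique:
  assumes "count_list w v = 1" "i < length w" "j < length w" "w ! i = v" "w ! j = v"
  shows "i = j"
proof (rule ccontr)
  assume "i \<noteq> j"
  then have "card {i, j} \<le> card {i. i < length w \<and> v = w ! i}"
    using assms by (intro card_mono) auto
  then show False
    using assms(1) \<open>i \<noteq> j\<close> by (simp add: count_list_eq_length_filter length_filter_conv_card)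
qed

lemma position:
  assumes "count_list w v = 1"
  shows "position w v < length w" "w ! position w v = v"
proof -
  have "v \<in> set w" using assms by (metis count_list_0_iff zero_neq_one)
  then obtain t where "t < length w" "w ! t = v" by (auto simp: in_set_conv_nth)
  then have "\<exists>!t. t < length w \<and> w ! t = v"
    using count_list_eq_1_nth_unique[OF assms] by blast
  then show "position w v < length w" "w ! position w v = v"
    unfolding position_def by (metis (mono_tags, lifting) theI')+
qed

lemma position_unique:
  assumes "count_list w v = 1" "t < length w" "w ! t = v"
  shows "position w v = t"
  using count_list_eq_1_nth_unique[OF assms(1) position(1)[OF assms(1)] assms(2)
      position(2)[OF assms(1)] assms(3)] .

lemma cnth_position: "count_list w v = 1 \<Longrightarrow> cnth w (int (position w v)) = v"
  by (simp add: position cnth_of_nat_less)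

lemma cnth_eq_iff_position:
  assumes "count_list w v = 1"
  shows "cnth w z = v \<longleftrightarrow> z mod int (length w) = int (position w v)"
proof -
  define n where "n = nat (z mod int (length w))"
  have L: "0 < int (length w)" using assms by (cases w) auto
  then have "n < length w" by (simp add: n_def nat_less_iff)
  then have "w ! n = v \<longleftrightarrow> n = position w v"
    using position(2)[OF assms] position_unique[OF assms, of n] by auto
  moreover have "int n = z mod int (length w)" using L by (simp add: n_def)
  moreover have "cnth w z = w ! n" by (simp add: cnth_def n_def)
  ultimately show ?thesis by auto
qed

lemma cnth_neq_single:
  assumes "count_list w v = 1" "int (position w v) < z" "z < int (position w v) + int (length w)"
  shows "cnth w z \<noteq> v"
proof
  assume "cnth w z = v"
  then have "z mod int (length w) = int (position w v) mod int (length w)"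
    using cnth_eq_iff_position[OF assms(1)] position(1)[OF assms(1)] by simp
  then have "int (length w) dvd z - int (position w v)" by (simp add: mod_eq_dvd_iff)
  then show False using assms(2,3) zdvd_imp_le by fastforce
qed

definition nbrs :: "'a list \<Rightarrow> int \<Rightarrow> 'a multiset" where
  "nbrs w z = {#cnth w (z - 1), cnth w (z + 1)#}"

lemma nbrs_mod [simp]: "nbrs w (z mod int (length w)) = nbrs w z"
proof -
  have "cnth w (z mod int (length w) - 1) = cnth w (z - 1)"
    by (rule cnth_cong) (simp add: mod_diff_left_eq)
  moreover have "cnth w (z mod int (length w) + 1) = cnth w (z + 1)"
    by (rule cnth_cong) (simp add: mod_add_left_eq)
  ultimately show ?thesis by (simp add: nbrs_def)
qed

lemma in_nbrsE:
  assumes "x \<in># nbrs w z"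
  obtains d where "d = 1 \<or> d = - 1" "cnth w (z + d) = x"
proof -
  from assms have "x = cnth w (z + - 1) \<or> x = cnth w (z + 1)" by (simp add: nbrs_def)
  then show thesis using that[of 1] that[of "- 1"] by auto
qed

lemma nbrs_in_set: "x \<in># nbrs w z \<Longrightarrow> w \<noteq> [] \<Longrightarrow> x \<in> set w"
  by (auto simp: nbrs_def cnth_in_set)

definition orient :: "bool \<Rightarrow> 'a \<Rightarrow> 'a \<Rightarrow> 'a \<times> 'a" where
  "orient b v x = (if b then (v, x) else (x, v))"

lemma orient_eq_orient_iff: "y \<noteq> v \<Longrightarrow> orient b' v y = orient b v x \<longleftrightarrow> b' = b \<and> y = x"
  by (auto simp: orient_def)

lemma even_length_ge_2: "even (length w) \<Longrightarrow> w \<noteq> [] \<Longrightarrow> 2 \<le> length w"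
  by (cases w) (auto elim: oddE)

lemma single_notin_nbrs:
  assumes ev: "even (length w)" and c: "count_list w v = 1"
  shows "v \<notin># nbrs w (int (position w v))"
proof -
  define t where "t = int (position w v)"
  have "w \<noteq> []" using c by auto
  then have L2: "2 \<le> length w" using even_length_ge_2[OF ev] by simp
  have "cnth w (t + 1) \<noteq> v" using cnth_neq_single[OF c, of "t + 1"] L2 by (simp add: t_def)
  moreover have "cnth w (t - 1) \<noteq> v"
    using cnth_neq_single[OF c, of "t - 1 + int (length w)"] L2 by (simp add: t_def)
  ultimately show ?thesis by (auto simp: nbrs_def t_def)
qed

lemma walk_edges_at_single:
  assumes ev: "even (length w)" and c: "count_list w v = 1"
  defines "t \<equiv> int (position w v)"
  obtains R where "walk_edges w = {#step_edge w (t - 1), step_edge w t#} + R"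
    and "\<And>e. e \<in># R \<Longrightarrow> fst e \<noteq> v \<and> snd e \<noteq> v"
proof
  define L where "L = length w"
  have "w \<noteq> []" using c by auto
  then have L2: "2 \<le> L" using even_length_ge_2[OF ev] by (simp add: L_def)
  have "[0..<L] = 0 # 1 # [2..<L]" using L2 by (simp add: upt_conv_Cons numeral_2_eq_2)
  then show "walk_edges w = {#step_edge w (t - 1), step_edge w t#}
      + mset (map (\<lambda>q. step_edge w (t - 1 + int q)) [2..<L])"
    unfolding walk_edges_window[OF ev, of "t - 1"] L_def by simp
  fix e assume "e \<in># mset (map (\<lambda>q. step_edge w (t - 1 + int q)) [2..<L])"
  then obtain q where q: "2 \<le> q" "q < L" "e = step_edge w (t - 1 + int q)" by auto
  have "cnth w z \<noteq> v" if "t < z" "z < t + int L" for z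
    using cnth_neq_single[OF c] that by (simp add: t_def L_def)
  then show "fst e \<noteq> v \<and> snd e \<noteq> v" using q by (simp add: step_edge_def)
qed

text \<open>Both steps at a vertex visited once put it on the same side of the edge.\<close>

lemma count_walk_edges_single:
  assumes ev: "even (length w)" and c: "count_list w v = 1"
  shows "count (walk_edges w) (orient b v x) =
           (if b = even (position w v) then count (nbrs w (int (position w v))) x else 0)"
proof -
  define t where "t = int (position w v)"
  obtain R where R: "walk_edges w = {#step_edge w (t - 1), step_edge w t#} + R"
    and avoid: "\<And>e. e \<in># R \<Longrightarrow> fst e \<noteq> v \<and> snd e \<noteq> v"
    using walk_edges_at_single[OF ev c] unfolding t_def by blast
  have "count R (orient b' v x) = 0" for b'
    using avoid[of "orient b' v x"] by (cases b') (auto simp: orient_def count_eq_zero_iff)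
  moreover have "cnth w t = v" using cnth_position[OF c] by (simp add: t_def)
  then have "step_edge w (t - 1) = orient (even t) v (cnth w (t - 1))"
    "step_edge w t = orient (even t) v (cnth w (t + 1))"
    by (simp_all add: step_edge_def orient_def)
  moreover have "cnth w (t - 1) \<noteq> v" "cnth w (t + 1) \<noteq> v"
    using single_notin_nbrs[OF ev c] by (auto simp: nbrs_def t_def)
  ultimately show ?thesis using R by (simp add: orient_eq_orient_iff nbrs_def t_def)
qed

lemma nbrs_sym:
  assumes ev: "even (length w)" and cv: "count_list w v = 1" and cz: "count_list w z = 1"
    and z: "z \<in># nbrs w (int (position w v))"
  shows "v \<in># nbrs w (int (position w z))" "even (position w z) \<longleftrightarrow> odd (position w v)"
proof -
  define t where "t = int (position w v)"
  obtain d where d: "d = 1 \<or> d = - 1" "cnth w (t + d) = z"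
    using z unfolding t_def by (rule in_nbrsE)
  then have pz: "int (position w z) = (t + d) mod int (length w)"
    using cnth_eq_iff_position[OF cz, of "t + d"] by simp
  have "cnth w (t + d - d) = v" using cnth_position[OF cv] by (simp add: t_def)
  then have "v \<in># nbrs w (t + d)" using d(1) by (auto simp: nbrs_def)
  then show "v \<in># nbrs w (int (position w z))" by (simp add: pz)
  have "even (int (position w z)) \<longleftrightarrow> odd t"
    using pz d(1) even_mod_length[OF ev, of "t + d"] by auto
  then show "even (position w z) \<longleftrightarrow> odd (position w v)" by (simp add: t_def)
qed

section \<open>Removing a balanced leaf\<close>

lemma bal_leaf_iff:
  "bal_leaf w v \<longleftrightarrow> length w > 2 \<and> count_list w v = 1 \<and>
     cnth w (int (position w v) - 1) = cnth w (int (position w v) + 1)"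
proof -
  have prev: "w ! ((t + length w - 1) mod length w) = cnth w (int t - 1)" if "t < length w" for t
  proof -
    have "int (t + length w - 1) = int t - 1 + int (length w)" using that by simp
    then have "cnth w (int t - 1) = cnth w (int (t + length w - 1))" by simp
    then show ?thesis by (simp only: cnth_of_nat)
  qed
  have succ: "w ! ((t + 1) mod length w) = cnth w (int t + 1)" for t
    using cnth_of_nat[of w "t + 1"] by (simp add: add.commute)
  show ?thesis
  proof
    assume "bal_leaf w v"
    then obtain t where t: "length w > 2" "count_list w v = 1" "t < length w" "w ! t = v"
      "w ! ((t + length w - 1) mod length w) = w ! ((t + 1) mod length w)"
      unfolding bal_leaf_def by blast
    then show "length w > 2 \<and> count_list w v = 1 \<and>
        cnth w (int (position w v) - 1) = cnth w (int (position w v) + 1)"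
      using position_unique[OF t(2-4)] prev[OF t(3)] succ[of t] by simp
  next
    assume h: "length w > 2 \<and> count_list w v = 1 \<and>
        cnth w (int (position w v) - 1) = cnth w (int (position w v) + 1)"
    then have c: "count_list w v = 1" by simp
    have t: "position w v < length w" "w ! position w v = v" using position[OF c] by simp_all
    show "bal_leaf w v"
      unfolding bal_leaf_def using h c t prev[OF t(1)] succ[of "position w v"] by metis
  qed
qed

lemmas bal_leafD = bal_leaf_iff[THEN iffD1, THEN conjunct1]
  bal_leaf_iff[THEN iffD1, THEN conjunct2, THEN conjunct1]
  bal_leaf_iff[THEN iffD1, THEN conjunct2, THEN conjunct2]

text \<open>Both neighbours of the leaf v are the same vertex u, so read from v onwards, w is the
  excursion v u followed by the walk with that excursion removed.\<close>

lemma rotate_remove_leaf: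
  assumes bl: "bal_leaf w v"
  defines "t \<equiv> position w v"
  shows "rotate t w = v # cnth w (int t + 1) # rotate t (remove_leaf w v)"
proof -
  have L: "length w > 2" and c: "count_list w v = 1" using bal_leafD[OF bl] by auto
  have tw: "t < length w" "w ! t = v" using position[OF c] by (simp_all add: t_def)
  have rl: "remove_leaf w v = (if t + 1 < length w then take t w @ drop (t + 2) w
                              else take (length w - 2) w)"
    by (simp add: remove_leaf_def Let_def t_def position_def)
  show ?thesis
  proof (cases "t + 1 < length w")
    case True
    have "rotate t w = drop t w @ take t w" using tw by (simp add: rotate_drop_take)
    also have "drop t w = w ! t # w ! (t + 1) # drop (t + 2) w"
      using True by (simp add: Cons_nth_drop_Suc)
    also have "rotate t (remove_leaf w v) = drop (t + 2) w @ take t w"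
      using True rl rotate_append[of "take t w" "drop (t + 2) w"] by simp
    moreover have "cnth w (int t + 1) = w ! (t + 1)"
      using True cnth_of_nat_less[of "t + 1" w] by (simp add: add.commute)
    ultimately show ?thesis using tw by simp
  next
    case False
    define L where "L = length w"
    define u where "u = take (L - 2) w"
    have t: "t = L - 1" using False tw by (simp add: L_def)
    have "drop (L - 2) w = [w ! (L - 2), w ! (L - 1)]"
      using L Cons_nth_drop_Suc[of "L - 2" w] Cons_nth_drop_Suc[of "L - 1" w]
      by (simp add: L_def Suc_diff_Suc numeral_2_eq_2)
    then have w: "w = u @ [w ! (L - 2), v]" using tw t by (metis append_take_drop_id u_def)
    have u: "u \<noteq> []" "length u = L - 2" "hd u = w ! 0"
      using L by (auto simp: u_def L_def hd_conv_nth intro!: hd_conv_nth)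
    have a: "cnth w (int t + 1) = hd u" using L t u by (simp add: L_def cnth_def)
    have "int t - 1 = int (L - 2)" using L t by (simp add: L_def of_nat_diff)
    then have "w ! (L - 2) = cnth w (int t - 1)"
      using L by (simp only:) (rule cnth_of_nat_less[symmetric], simp add: L_def)
    then have b: "w ! (L - 2) = hd u" using bal_leafD(3)[OF bl] a by (simp add: t_def)
    have w': "w = (u @ [hd u]) @ [v]" using w b by simp
    have "t = length (u @ [hd u])" using t u L by (simp add: L_def)
    then have "rotate t w = v # u @ [hd u]" by (subst w') (simp only: rotate_append, simp)
    moreover have "rotate t (remove_leaf w v) = tl u @ [hd u]"
    proof -
      have "remove_leaf w v = u" "t = 1 + length u" using rl False t u L by (simp_all add: u_def L_def)
      then show ?thesis using u(1) rotate_append[of u "[]"] by (simp add: rotate_add rotate1_hd_tl)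
    qed
    ultimately show ?thesis using u(1) a by simp
  qed
qed

lemma length_remove_leaf: "bal_leaf w v \<Longrightarrow> length (remove_leaf w v) = length w - 2"
  using arg_cong[where f = length, OF rotate_remove_leaf] by simp

lemma cnth_remove_leaf:
  assumes bl: "bal_leaf w v"
    and z: "int (position w v) \<le> z" "z < int (position w v) + int (length w) - 2"
  shows "cnth (remove_leaf w v) z = cnth w (z + 2)"
proof -
  define t where "t = position w v"
  define k where "k = nat (z - int t)"
  have len: "length (remove_leaf w v) = length w - 2" by (rule length_remove_leaf[OF bl])
  have L: "length w > 2" using bal_leafD(1)[OF bl] .
  have k: "k < length w - 2" "z = int t + int k" using z L by (auto simp: k_def t_def)
  have ne: "remove_leaf w v \<noteq> []" "w \<noteq> []" using len L by auto
  have "cnth (remove_leaf w v) z = cnth (rotate t (remove_leaf w v)) (int k)"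
    using k ne by (simp add: cnth_rotate add.commute)
  also have "\<dots> = rotate t (remove_leaf w v) ! k" using k len by (simp add: cnth_of_nat_less)
  also have "\<dots> = rotate t w ! (k + 2)" using rotate_remove_leaf[OF bl] by (simp add: t_def)
  also have "\<dots> = w ! ((t + (k + 2)) mod length w)" using k by (simp add: nth_rotate)
  also have "\<dots> = cnth w (int (t + (k + 2)))" by (simp only: cnth_of_nat)
  also have "int (t + (k + 2)) = z + 2" using k by simp
  finally show ?thesis .
qed

lemma set_remove_leaf:
  assumes bl: "bal_leaf w v"
  shows "set (remove_leaf w v) = set w - {v}"
proof -
  define t where "t = position w v"
  define u where "u = cnth w (int t + 1)"
  define w' where "w' = remove_leaf w v"
  have rot: "rotate t w = v # u # rotate t w'"
    using rotate_remove_leaf[OF bl] by (simp add: t_def u_def w'_def)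
  have L: "length w > 2" and c: "count_list w v = 1" using bal_leafD[OF bl] by auto
  have "count_list (rotate t w) v = 1"
    using c by (metis count_mset mset_rotate)
  then have "v \<notin> set w'" using rot by (auto simp: count_list_0_iff split: if_splits)
  moreover have "u \<in> set w'"
  proof -
    have "cnth w' (int t + int (length w) - 3) = cnth w (int t - 1 + int (length w))"
      using cnth_remove_leaf[OF bl, of "int t + int (length w) - 3"] L
      by (simp add: t_def w'_def algebra_simps)
    also have "\<dots> = u" using bal_leafD(3)[OF bl] by (simp add: t_def u_def)
    finally show ?thesis
      using cnth_in_set[of w'] length_remove_leaf[OF bl] L by (force simp: w'_def)
  qed
  moreover have "set w = insert v (insert u (set w'))"
    using arg_cong[where f = set, OF rot] by simp
  ultimately show ?thesis by (auto simp: w'_def)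
qed

lemma walk_edges_remove_leaf:
  assumes bl: "bal_leaf w v" and ev: "even (length w)"
  defines "e \<equiv> step_edge w (int (position w v))"
  shows "walk_edges w = walk_edges (remove_leaf w v) + {#e, e#}"
proof -
  define t where "t = int (position w v)"
  define w' where "w' = remove_leaf w v"
  define m where "m = length w - 3"
  define f where "f = (\<lambda>q. step_edge w (t + 1 + int q))"
  define g where "g = (\<lambda>q. step_edge w' (t + int q))"
  have L: "length w = m + 3" using bal_leafD(1)[OF bl] by (simp add: m_def)
  have L': "length w' = m + 1" using length_remove_leaf[OF bl] L by (simp add: w'_def)
  have ev': "even (length w')" using L L' ev by simp
  have rc: "cnth w' z = cnth w (z + 2)" if "t \<le> z" "z < t + int m + 1" for z
    using cnth_remove_leaf[OF bl] that L by (simp add: t_def w'_def)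
  have bal: "cnth w (t - 1) = cnth w (t + 1)" using bal_leafD(3)[OF bl] by (simp add: t_def)
  have "odd (int m)" using ev L by simp
  have g_f: "g q = f (Suc q)" if "q < m" for q
    using that rc[of "t + int q"] rc[of "t + int q + 1"] by (simp add: f_def g_def step_edge_def ac_simps)
  have g_m: "g m = f 0"
  proof -
    have "cnth w' (t + int m) = cnth w (t + 1)"
      using rc[of "t + int m"] bal cnth_add_length[of w "t - 1"] L by (simp add: ac_simps)
    moreover have "cnth w' (t + int m + 1) = cnth w (t + 1 + 1)"
      using cnth_add_length[of w' t] rc[of t] L' by (simp add: ac_simps)
    ultimately show ?thesis using \<open>odd (int m)\<close> by (simp add: f_def g_def step_edge_def)
  qed
  have f_end: "f (Suc m) = step_edge w t" "f (Suc (Suc m)) = step_edge w t"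
  proof -
    have "f (Suc m) = step_edge w (t - 1)"
      using step_edge_add_length[OF ev, of "t - 1"] L by (simp add: f_def ac_simps)
    also have "\<dots> = step_edge w t" using bal by (simp add: step_edge_def)
    finally show "f (Suc m) = step_edge w t" .
    show "f (Suc (Suc m)) = step_edge w t"
      using step_edge_add_length[OF ev, of t] L by (simp add: f_def ac_simps)
  qed
  have "walk_edges w' = mset (map g [0..<m] @ [g m])"
    using walk_edges_window[OF ev', of t] L' by (simp add: g_def)
  also have "map g [0..<m] @ [g m] = map (\<lambda>q. f (Suc q)) [0..<m] @ [f 0]" using g_f g_m by simp
  finally have "walk_edges w' = mset (map f [0..<Suc m])" by (simp add: map_upt_Suc del: upt_Suc)
  moreover have "walk_edges w = mset (map f [0..<Suc m]) + {#f (Suc m), f (Suc (Suc m))#}"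
    using walk_edges_window[OF ev, of "t + 1"] L by (simp add: f_def numeral_3_eq_3)
  ultimately show ?thesis using f_end by (simp add: e_def t_def w'_def)
qed

section \<open>Products of moments\<close>

text \<open>For i.i.d. entries with moments \<mu> n = E[Y^n], moment_prod \<mu> F is the expectation
  of the product of the entries indexed by the multiset F.\<close>

definition moment_prod :: "(nat \<Rightarrow> 'b::comm_ring_1) \<Rightarrow> 'a multiset \<Rightarrow> 'b" where
  "moment_prod \<mu> F = (\<Prod>e\<in>set_mset F. \<mu> (count F e))"

definition moment_cov :: "(nat \<Rightarrow> 'b::comm_ring_1) \<Rightarrow> 'a multiset \<Rightarrow> 'a multiset \<Rightarrow> 'b" where
  "moment_cov \<mu> F G = moment_prod \<mu> (F + G) - moment_prod \<mu> F * moment_prod \<mu> G"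

lemma moment_prod_union_disjoint:
  assumes "set_mset F \<inter> set_mset G = {}"
  shows "moment_prod \<mu> (F + G) = moment_prod \<mu> F * moment_prod \<mu> G"
proof -
  have "moment_prod \<mu> (F + G)
      = (\<Prod>e\<in>set_mset F. \<mu> (count (F + G) e)) * (\<Prod>e\<in>set_mset G. \<mu> (count (F + G) e))"
    using assms by (simp add: moment_prod_def prod.union_disjoint)
  also have "(\<Prod>e\<in>set_mset F. \<mu> (count (F + G) e)) = moment_prod \<mu> F"
    unfolding moment_prod_def
  proof (intro prod.cong refl)
    fix e assume "e \<in> set_mset F"
    then have "e \<notin># G" using assms by blast
    then show "\<mu> (count (F + G) e) = \<mu> (count F e)" by (simp add: not_in_iff)
  qed
  also have "(\<Prod>e\<in>set_mset G. \<mu> (count (F + G) e)) = moment_prod \<mu> G"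
    unfolding moment_prod_def
  proof (intro prod.cong refl)
    fix e assume "e \<in> set_mset G"
    then have "e \<notin># F" using assms by blast
    then show "\<mu> (count (F + G) e) = \<mu> (count G e)" by (simp add: not_in_iff)
  qed
  finally show ?thesis .
qed

lemma moment_prod_eq_0:
  assumes "\<mu> 1 = 0" "count F e = 1"
  shows "moment_prod \<mu> F = 0"
proof -
  have "e \<in># F" using assms(2) not_in_iff[of e F] by simp
  then show ?thesis
    using assms unfolding moment_prod_def by (intro prod_zero) (auto intro!: bexI[of _ e])
qed

lemma moment_prod_add_pair:
  assumes "e \<notin># F"
  shows "moment_prod \<mu> (F + {#e, e#}) = \<mu> 2 * moment_prod \<mu> F"
proof -
  have "moment_prod \<mu> (F + {#e, e#})
      = \<mu> (count (F + {#e, e#}) e) * (\<Prod>x\<in>set_mset F. \<mu> (count (F + {#e, e#}) x))"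
    using assms by (simp add: moment_prod_def prod.insert)
  also have "(\<Prod>x\<in>set_mset F. \<mu> (count (F + {#e, e#}) x)) = moment_prod \<mu> F"
    unfolding moment_prod_def using assms by (intro prod.cong) auto
  also have "count (F + {#e, e#}) e = 2" using assms by (simp add: not_in_iff)
  finally show ?thesis by simp
qed

lemma moment_prod_const:
  "(\<And>e. e \<in># F \<Longrightarrow> count F e = c) \<Longrightarrow> moment_prod \<mu> F = \<mu> c ^ card (set_mset F)"
  by (simp add: moment_prod_def)

lemma moment_cov_commute: "moment_cov \<mu> F G = moment_cov \<mu> G F"
  by (simp add: moment_cov_def ac_simps)

lemma moment_cov_add_pair:
  assumes "e \<notin># F" "e \<notin># G" "\<mu> 2 = 1"
  shows "moment_cov \<mu> (F + {#e, e#}) G = moment_cov \<mu> F G"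
proof -
  have "F + {#e, e#} + G = (F + G) + {#e, e#}" by (simp add: ac_simps)
  then show ?thesis
    using assms moment_prod_add_pair[of e "F + G" \<mu>] moment_prod_add_pair[of e F \<mu>]
    by (simp add: moment_cov_def)
qed

lemma moment_cov_self_simple:
  assumes "\<mu> 1 = 0" "\<mu> 2 = 1" "F \<noteq> {#}" "\<And>e. e \<in># F \<Longrightarrow> count F e = 1"
  shows "moment_cov \<mu> F F = 1"
proof -
  have "moment_prod \<mu> (F + F) = \<mu> 2 ^ card (set_mset (F + F))"
    using assms(4) by (intro moment_prod_const) (auto simp: mult_2[symmetric])
  moreover have "moment_prod \<mu> F = \<mu> 1 ^ card (set_mset F)"
    using assms(4) by (intro moment_prod_const) auto
  moreover have "card (set_mset F) > 0" using assms(3) by (simp add: card_gt_0_iff)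
  ultimately show ?thesis using assms(1-3) by (simp add: moment_cov_def power_0_left)
qed

lemma moment_cov_double_pair:
  "\<mu> 2 = 1 \<Longrightarrow> moment_cov \<mu> {#e, e#} {#e, e#} = \<mu> 4 - 1"
  by (simp add: moment_cov_def moment_prod_def numeral_eq_Suc)

definition double_ring :: "nat list \<times> nat list \<Rightarrow> bool" where
  "double_ring p \<longleftrightarrow> double_2_ring 2 p \<or>
     (\<exists>l0. even l0 \<and> 4 \<le> l0 \<and> (double_1_ring l0 p \<or> double_2_ring l0 p))"

definition ring_value :: "(nat \<Rightarrow> 'b::comm_ring_1) \<Rightarrow> nat list \<times> nat list \<Rightarrow> 'b" where
  "ring_value \<mu> p = (if double_2_ring 2 p then \<mu> 4 - 1
     else if \<exists>l0. even l0 \<and> l0 \<ge> 4 \<and> double_1_ring l0 p then 1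
     else if \<exists>l0. even l0 \<and> l0 \<ge> 4 \<and> double_2_ring l0 p then 1
     else 0)"

lemma ring_value_eq_0: "\<not> double_ring p \<Longrightarrow> ring_value \<mu> p = 0"
  by (auto simp: double_ring_def ring_value_def)

lemma length_2_conv: "length xs = 2 \<Longrightarrow> xs = [xs ! 0, xs ! 1]"
  by (cases xs; cases "tl xs") auto

lemma ring_base_2_eq:
  assumes "ring_base 2 (s1, s2)"
  shows "s2 = s1" "s1 = [s1 ! 0, s1 ! 1]"
proof -
  obtain t where t: "t < 2" "s1 ! t = s2 ! 0" "even t" and d: "distinct s1" "distinct s2"
    and len: "length s1 = 2" "length s2 = 2" and st: "set s1 = set s2"
    using assms unfolding ring_base_def by auto
  show s1: "s1 = [s1 ! 0, s1 ! 1]" using len length_2_conv by metis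
  have s2: "s2 = [s2 ! 0, s2 ! 1]" using len length_2_conv by metis
  have "t = 0" using t by presburger
  then have "s2 ! 0 = s1 ! 0" using t by simp
  moreover have "s2 ! 1 \<noteq> s2 ! 0" using d len by (simp add: nth_eq_iff_index_eq)
  moreover have "s2 ! 1 \<in> set s1" using st len by simp
  moreover have "set s1 = {s1 ! 0, s1 ! 1}" by (subst s1) simp
  ultimately have "s2 ! 1 = s1 ! 1" by auto
  then show "s2 = s1" using s1 s2 \<open>s2 ! 0 = s1 ! 0\<close> by metis
qed

lemma count_walk_edges_distinct:
  assumes d: "distinct w" and L: "length w \<ge> 3" "even (length w)" and e: "e \<in># walk_edges w"
  shows "count (walk_edges w) e = 1"
proof -
  obtain r y where e_def: "e = (r, y)" by (cases e)
  have c: "count_list w x = 1" if "x \<in> set w" for x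
    using d that by (metis count_mset distinct_count_atmost_1)
  have cr: "count_list w r = 1" using c walk_edges_vertices[OF e] by (simp add: e_def)
  define t where "t = int (position w r)"
  have "cnth w (t - 1) \<noteq> cnth w (t + 1)"
  proof
    assume h: "cnth w (t - 1) = cnth w (t + 1)"
    define u where "u = cnth w (t + 1)"
    have cu: "count_list w u = 1" using c cnth_in_set[of w] L by (force simp: u_def)
    have "(t - 1) mod int (length w) = (t + 1) mod int (length w)"
      using cnth_eq_iff_position[OF cu, of "t - 1"] cnth_eq_iff_position[OF cu, of "t + 1"] h
      by (simp add: u_def)
    then have "int (length w) dvd 2" by (simp add: mod_eq_dvd_iff)
    then have "int (length w) \<le> 2" by (rule zdvd_imp_le) simp
    then show False using L by simp
  qed
  then have "count (nbrs w t) y \<le> 1" by (auto simp: nbrs_def)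
  moreover have "count (walk_edges w) e \<le> count (nbrs w t) y"
    using count_walk_edges_single[OF L(2) cr, of True y] by (simp add: e_def orient_def t_def)
  moreover have "0 < count (walk_edges w) e" using e by simp
  ultimately show ?thesis by linarith
qed

lemma ring_base_start_even:
  assumes "ring_base l0 (s1, s2)" "0 < l0" "s2 ! 0 = s1 ! (n mod l0)"
  shows "even n"
proof -
  obtain t where t: "t < l0" "s1 ! t = s2 ! 0" "even t"
    and d: "distinct s1" and len: "length s1 = l0" "even l0"
    using assms(1) unfolding ring_base_def by auto
  have "t = n mod l0" using d t assms(2,3) len by (simp add: nth_eq_iff_index_eq)
  then show ?thesis using t(3) len(2) by (metis dvd_mod_iff)
qed

lemma moment_cov_double_1_ring:
  assumes m: "\<mu> 1 = 0" "\<mu> 2 = 1" and r: "double_1_ring l0 (s1, s2)"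
  shows "moment_cov \<mu> (walk_edges s1) (walk_edges s2) = 1"
proof -
  obtain n where l0: "l0 \<ge> 4" and rb: "ring_base l0 (s1, s2)" and n: "s2 = rotate n s1"
    using r unfolding double_1_ring_def by auto
  have len: "length s1 = l0" "even l0" "distinct s1" using rb by (auto simp: ring_base_def)
  have "s2 ! 0 = s1 ! (n mod l0)" using n len l0 by (simp add: nth_rotate)
  then have "even n" using ring_base_start_even[OF rb] l0 by simp
  then have "walk_edges s2 = walk_edges s1" using n len walk_edges_rotate[of s1 n] by simp
  moreover have "walk_edges s1 \<noteq> {#}" using len l0 by auto
  moreover have "count (walk_edges s1) e = 1" if "e \<in># walk_edges s1" for e
    using count_walk_edges_distinct[OF len(3) _ _ that] len l0 by simp
  ultimately show ?thesis using moment_cov_self_simple[OF m] by metis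
qed

lemma moment_cov_double_2_ring:
  assumes m: "\<mu> 1 = 0" "\<mu> 2 = 1" and r: "double_2_ring l0 (s1, s2)" and l0: "l0 \<ge> 4"
  shows "moment_cov \<mu> (walk_edges s1) (walk_edges s2) = 1"
proof -
  obtain n where rb: "ring_base l0 (s1, s2)" and n: "rev s2 = rotate n s1"
    using r unfolding double_2_ring_def by auto
  have len: "length s1 = l0" "even l0" "distinct s1" using rb by (auto simp: ring_base_def)
  have s2: "s2 = rev (rotate n s1)" using n by (metis rev_rev_ident)
  then have "s2 ! 0 = s1 ! ((n + (l0 - 1)) mod l0)" using len l0 by (simp add: rev_nth nth_rotate)
  then have "even (n + (l0 - 1))" using ring_base_start_even[OF rb, of "n + (l0 - 1)"] l0 by simp
  then have "odd n" using len(2) l0 by presburger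
  then have "walk_edges s2 = walk_edges s1" using s2 len walk_edges_rev_rotate[of s1 n] by simp
  moreover have "walk_edges s1 \<noteq> {#}" using len l0 by auto
  moreover have "count (walk_edges s1) e = 1" if "e \<in># walk_edges s1" for e
    using count_walk_edges_distinct[OF len(3) _ _ that] len l0 by simp
  ultimately show ?thesis using moment_cov_self_simple[OF m] by metis
qed

lemma moment_cov_double_2_ring_2:
  assumes "\<mu> 2 = 1" "double_2_ring 2 (s1, s2)"
  shows "moment_cov \<mu> (walk_edges s1) (walk_edges s2) = \<mu> 4 - 1"
proof -
  have "ring_base 2 (s1, s2)" using assms(2) by (simp add: double_2_ring_def)
  then have "s2 = s1" "walk_edges s1 = {#(s1 ! 0, s1 ! 1), (s1 ! 0, s1 ! 1)#}"
    using ring_base_2_eq walk_edges_two by metis+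
  then show ?thesis using moment_cov_double_pair[of \<mu>, OF assms(1)] by simp
qed

lemma moment_cov_double_ring:
  assumes m: "\<mu> 1 = 0" "\<mu> 2 = 1" and r: "double_ring (s1, s2)"
  shows "moment_cov \<mu> (walk_edges s1) (walk_edges s2) = ring_value \<mu> (s1, s2)"
proof (cases "double_2_ring 2 (s1, s2)")
  case True
  then show ?thesis using moment_cov_double_2_ring_2[of \<mu>, OF m(2)] by (simp add: ring_value_def)
next
  case not22: False
  show ?thesis
  proof (cases "\<exists>l0. even l0 \<and> l0 \<ge> 4 \<and> double_1_ring l0 (s1, s2)")
    case True
    then obtain l0 where "double_1_ring l0 (s1, s2)" by blast
    then show ?thesis using moment_cov_double_1_ring[OF m] not22 True by (simp add: ring_value_def)
  next
    case False
    then obtain l0 where "double_2_ring l0 (s1, s2)" "4 \<le> l0" "even l0"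
      using r not22 by (auto simp: double_ring_def)
    moreover from this have "\<exists>l0. even l0 \<and> l0 \<ge> 4 \<and> double_2_ring l0 (s1, s2)" by blast
    ultimately show ?thesis using moment_cov_double_2_ring[OF m] not22 False by (simp add: ring_value_def)
  qed
qed

section \<open>Leafless pairs are double rings\<close>

text \<open>The parity of a position tells whether a vertex is used as a row or as a column index.\<close>

definition matched :: "'a list \<Rightarrow> 'a list \<Rightarrow> 'a \<Rightarrow> bool" where
  "matched s1 s2 v \<longleftrightarrow> count_list s1 v = 1 \<and> count_list s2 v = 1 \<and>
     even (position s1 v) = even (position s2 v) \<and>
     nbrs s1 (int (position s1 v)) = nbrs s2 (int (position s2 v))"

lemma matched_commute: "matched s1 s2 v = matched s2 s1 v"
  unfolding matched_def by auto

lemma list_eq_if_cnth_eq: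
  assumes "length u = length w" "\<And>z. cnth u z = cnth w z"
  shows "u = w"
proof (rule nth_equalityI)
  fix i assume "i < length u"
  then show "u ! i = w ! i" using assms cnth_of_nat_less[of i u] cnth_of_nat_less[of i w] by simp
qed (use assms in simp)

lemma ring_base_if_matched:
  assumes ev: "even (length s1)" and ne: "s2 \<noteq> []"
    and m: "\<And>x. x \<in> set s1 \<union> set s2 \<Longrightarrow> matched s1 s2 x"
  shows "ring_base (length s1) (s1, s2)"
proof -
  have c1: "count_list s1 x = 1" and c2: "count_list s2 x = 1" if "x \<in> set s1 \<union> set s2" for x
    using m[OF that] by (auto simp: matched_def)
  have d: "distinct s1" "distinct s2"
    using c1 c2 by (auto simp: distinct_count_atmost_1 count_mset count_list_0_iff)
  have st: "set s1 = set s2"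
    using c1 c2 by (auto simp: count_list_0_iff) (metis count_list_0_iff zero_neq_one)+
  then have len: "length s2 = length s1" using d by (metis distinct_card)
  define u where "u = s2 ! 0"
  have u: "u \<in> set s1 \<union> set s2" using ne by (simp add: u_def)
  have "position s2 u = 0" using position_unique[OF c2[OF u], of 0] ne by (simp add: u_def)
  then have "even (position s1 u)" using m[OF u] by (simp add: matched_def)
  moreover have "position s1 u < length s1" "s1 ! position s1 u = s2 ! 0"
    using position[OF c1[OF u]] by (simp_all add: u_def)
  ultimately show ?thesis using ev d st len by (auto simp: ring_base_def)
qed

lemma cnth_follows_if_matched:
  fixes d t0 :: int
  assumes m: "\<And>x. x \<in> set s2 \<Longrightarrow> matched s1 s2 x"
    and len: "length s1 = length s2" "s2 \<noteq> []" and d: "d = 1 \<or> d = - 1"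
    and start: "cnth s2 0 = cnth s1 t0" "cnth s2 1 = cnth s1 (t0 + d)"
  shows "cnth s2 z = cnth s1 (t0 + d * z)"
proof -
  have step: "cnth s2 (k + 2) = cnth s1 (t0 + d * (k + 2))"
    if IH: "cnth s2 k = cnth s1 (t0 + d * k)" "cnth s2 (k + 1) = cnth s1 (t0 + d * (k + 1))"
    for k
  proof -
    define x where "x = cnth s2 (k + 1)"
    have "matched s1 s2 x" using m cnth_in_set[OF len(2)] by (simp add: x_def)
    then have c: "count_list s1 x = 1" "count_list s2 x = 1"
      and nb: "nbrs s1 (int (position s1 x)) = nbrs s2 (int (position s2 x))"
      by (auto simp: matched_def)
    have "int (position s2 x) = (k + 1) mod int (length s2)"
      using cnth_eq_iff_position[OF c(2), of "k + 1"] by (simp add: x_def)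
    moreover have "int (position s1 x) = (t0 + d * (k + 1)) mod int (length s1)"
      using cnth_eq_iff_position[OF c(1), of "t0 + d * (k + 1)"] IH(2) by (simp add: x_def)
    ultimately have "nbrs s1 (t0 + d * (k + 1)) = nbrs s2 (k + 1)" using nb by simp
    moreover have "nbrs s1 (t0 + d * (k + 1)) = {#cnth s1 (t0 + d * k), cnth s1 (t0 + d * (k + 2))#}"
    proof (cases "d = 1")
      case True
      then show ?thesis by (simp add: nbrs_def algebra_simps)
    next
      case False
      then have "d = - 1" using d by simp
      then show ?thesis by (simp add: nbrs_def algebra_simps add_mset_commute)
    qed
    moreover have "nbrs s2 (k + 1) = {#cnth s2 k, cnth s2 (k + 2)#}" by (simp add: nbrs_def add.assoc)
    ultimately show ?thesis using IH(1) by simp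
  qed
  have "cnth s2 (int n) = cnth s1 (t0 + d * int n) \<and>
        cnth s2 (int n + 1) = cnth s1 (t0 + d * (int n + 1))" for n
  proof (induction n)
    case (Suc n)
    then show ?case using step[of "int n"] by (simp add: ac_simps)
  qed (use start in simp)
  then have "cnth s2 (int (nat (z mod int (length s2))))
      = cnth s1 (t0 + d * int (nat (z mod int (length s2))))" by blast
  then have "cnth s2 z = cnth s1 (t0 + d * (z mod int (length s2)))" using len(2) by simp
  moreover have "cnth s1 (t0 + d * (z mod int (length s2))) = cnth s1 (t0 + d * z)"
    by (rule cnth_cong) (use len(1) in \<open>metis mod_add_right_eq mod_mult_right_eq\<close>)
  ultimately show ?thesis by simp
qed

lemma rotate_or_rev_rotate_if_matched:
  assumes len: "length s1 = length s2" and ne: "s2 \<noteq> []"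
    and m: "\<And>x. x \<in> set s2 \<Longrightarrow> matched s1 s2 x"
  obtains n where "s2 = rotate n s1" | n where "rev s2 = rotate n s1"
proof -
  define u where "u = s2 ! 0"
  have u: "u \<in> set s2" using ne by (simp add: u_def)
  have c: "count_list s1 u = 1" "count_list s2 u = 1" using m[OF u] by (auto simp: matched_def)
  define t0 where "t0 = int (position s1 u)"
  have start: "cnth s2 0 = cnth s1 t0"
    using cnth_position[OF c(1)] ne by (simp add: t0_def u_def cnth_def)
  have "position s2 u = 0" using position_unique[OF c(2), of 0] ne by (simp add: u_def)
  then have "cnth s2 1 \<in># nbrs s1 t0" using m[OF u] by (simp add: matched_def nbrs_def t0_def)
  then obtain d where d: "d = 1 \<or> d = - 1" "cnth s1 (t0 + d) = cnth s2 1"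
    by (rule in_nbrsE)
  have follow: "cnth s2 z = cnth s1 (t0 + d * z)" for z
    using cnth_follows_if_matched[of s2 s1 d t0 z] m d start len ne by simp
  have ne1: "s1 \<noteq> []" using len ne by auto
  from d(1) show thesis
  proof
    assume "d = 1"
    then have "cnth s2 z = cnth (rotate (position s1 u) s1) z" for z
      using follow[of z] ne1 by (simp add: cnth_rotate t0_def add.commute)
    then have "s2 = rotate (position s1 u) s1" using len by (intro list_eq_if_cnth_eq) simp_all
    then show thesis by (rule that(1))
  next
    assume "d = - 1"
    then have "cnth (rev s2) z = cnth (rotate (position s1 u + 1) s1) z" for z
      using follow[of "- 1 - z"] ne ne1
      by (simp add: cnth_rev cnth_rotate t0_def algebra_simps del: rotate_Suc)
    then have "rev s2 = rotate (position s1 u + 1) s1"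
      using len by (intro list_eq_if_cnth_eq) simp_all
    then show thesis by (rule that(2))
  qed
qed

theorem double_ring_if_matched:
  assumes ev: "even (length s1)" and ne: "s2 \<noteq> []"
    and m: "\<And>x. x \<in> set s1 \<union> set s2 \<Longrightarrow> matched s1 s2 x"
  shows "double_ring (s1, s2)"
proof -
  define L where "L = length s1"
  have rb: "ring_base L (s1, s2)" using ring_base_if_matched[OF ev ne m] by (simp add: L_def)
  then have len: "length s2 = L" "even L" "L \<noteq> 0" using ne by (auto simp: ring_base_def)
  show ?thesis
  proof (cases "L = 2")
    case True
    then have s: "s2 = s1" "s1 = [s1 ! 0, s1 ! 1]" using ring_base_2_eq rb by auto
    have "rev s1 = rotate 1 s1" by (subst (1 2) s(2)) simp
    then have "double_2_ring 2 (s1, s2)"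
      using rb True s(1) unfolding double_2_ring_def fst_conv snd_conv by blast
    then show ?thesis by (simp add: double_ring_def)
  next
    case False
    then have L4: "4 \<le> L" using len by presburger
    consider n where "s2 = rotate n s1" | n where "rev s2 = rotate n s1"
      using rotate_or_rev_rotate_if_matched[of s1 s2] len ne m by (auto simp: L_def)
    then show ?thesis
    proof cases
      case 1
      then show ?thesis using rb L4 len by (auto simp: double_ring_def double_1_ring_def)
    next
      case 2
      then have "double_2_ring L (s1, s2)"
        using rb unfolding double_2_ring_def fst_conv snd_conv by blast
      then show ?thesis using L4 len(2) unfolding double_ring_def by blast
    qed
  qed
qed

lemma pair_msets_eq_if_doubled:
  assumes "x \<in># {#a1, b1#}" "x \<in># {#a2, b2#}"
    and "\<And>y. y \<in># {#a1, b1#} + {#a2, b2#} \<Longrightarrow> 2 \<le> count ({#a1, b1#} + {#a2, b2#}) y"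
  shows "{#a1, b1#} = {#a2, b2#}"
proof -
  obtain c1 where A: "{#a1, b1#} = {#x, c1#}" using assms(1) by (auto simp: add_mset_commute)
  obtain c2 where B: "{#a2, b2#} = {#x, c2#}" using assms(2) by (auto simp: add_mset_commute)
  have "c1 = c2"
  proof (rule ccontr)
    assume ne: "c1 \<noteq> c2"
    have "2 \<le> count ({#x, c1#} + {#x, c2#}) c1" "2 \<le> count ({#x, c1#} + {#x, c2#}) c2"
      using assms(3)[of c1] assms(3)[of c2] unfolding A B by simp_all
    then show False using ne by (auto split: if_splits)
  qed
  then show ?thesis using A B by simp
qed

locale doubled_pair =
  fixes s1 s2 :: "'a list"
  assumes even_length: "even (length s1)" "even (length s2)"
    and edges_doubled: "\<And>e. e \<in># walk_edges s1 + walk_edges s2 \<Longrightarrow>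
                          2 \<le> count (walk_edges s1 + walk_edges s2) e"
    and visits_twice: "\<And>v. v \<in> set s1 \<union> set s2 \<Longrightarrow> count_list s1 v + count_list s2 v = 2"
begin

lemma swap: "doubled_pair s2 s1"
  using even_length edges_doubled visits_twice by unfold_locales (auto simp: add.commute)

lemma count_list_eq_1:
  assumes "v \<in> set s1" "v \<in> set s2"
  shows "count_list s1 v = 1" "count_list s2 v = 1"
proof -
  have "count_list s1 v \<noteq> 0" "count_list s2 v \<noteq> 0" using assms by (simp_all add: count_list_0_iff)
  then show "count_list s1 v = 1" "count_list s2 v = 1" using visits_twice[of v] assms by simp_all
qed

lemma count_nbrs_doubled:
  assumes c: "count_list s1 v = 1" "count_list s2 v = 1"
    and r: "even (position s1 v) = even (position s2 v)"
    and y: "y \<in># nbrs s1 (int (position s1 v)) + nbrs s2 (int (position s2 v))"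
  shows "2 \<le> count (nbrs s1 (int (position s1 v)) + nbrs s2 (int (position s2 v))) y"
proof -
  define b where "b = even (position s1 v)"
  have "count (walk_edges s1 + walk_edges s2) (orient b v y)
      = count (nbrs s1 (int (position s1 v)) + nbrs s2 (int (position s2 v))) y"
    using count_walk_edges_single[OF even_length(1) c(1), of b y]
      count_walk_edges_single[OF even_length(2) c(2), of b y] r by (simp add: b_def)
  then show ?thesis using edges_doubled[of "orient b v y"] y by (metis count_greater_zero_iff)
qed

lemma matchedI:
  assumes c: "count_list s1 v = 1" "count_list s2 v = 1"
    and r: "even (position s1 v) = even (position s2 v)"
    and x: "x \<in># nbrs s1 (int (position s1 v))" "x \<in># nbrs s2 (int (position s2 v))"
  shows "matched s1 s2 v"
proof -
  have "nbrs s1 (int (position s1 v)) = nbrs s2 (int (position s2 v))"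
    using x count_nbrs_doubled[OF c r] unfolding nbrs_def by (rule pair_msets_eq_if_doubled)
  then show ?thesis using c r by (simp add: matched_def)
qed

lemma matched_nbr:
  assumes m: "matched s1 s2 v" and z: "z \<in># nbrs s1 (int (position s1 v))"
  shows "matched s1 s2 z"
proof -
  have cv: "count_list s1 v = 1" "count_list s2 v = 1" using m by (auto simp: matched_def)
  have z2: "z \<in># nbrs s2 (int (position s2 v))" using m z by (simp add: matched_def)
  have "z \<in> set s1" "z \<in> set s2" using z z2 cv nbrs_in_set by fastforce+
  then have cz: "count_list s1 z = 1" "count_list s2 z = 1" by (rule count_list_eq_1)+
  have "v \<in># nbrs s1 (int (position s1 z))" "v \<in># nbrs s2 (int (position s2 z))"
    using nbrs_sym(1)[OF even_length(1) cv(1) cz(1) z] nbrs_sym(1)[OF even_length(2) cv(2) cz(2) z2] .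
  moreover have "even (position s1 z) = even (position s2 z)"
    using nbrs_sym(2)[OF even_length(1) cv(1) cz(1) z] nbrs_sym(2)[OF even_length(2) cv(2) cz(2) z2] m
    by (simp add: matched_def)
  ultimately show ?thesis using matchedI[OF cz] by blast
qed

lemma matched_along_first:
  assumes m: "matched s1 s2 r" and x: "x \<in> set s1"
  shows "matched s1 s2 x"
proof -
  define p where "p = int (position s1 r)"
  have walk: "matched s1 s2 (cnth s1 (p + int k))" for k
  proof (induction k)
    case 0
    then show ?case using m cnth_position[of s1 r] by (simp add: p_def matched_def)
  next
    case (Suc k)
    let ?y = "cnth s1 (p + int k)"
    have "count_list s1 ?y = 1" using Suc by (simp add: matched_def)
    then have "int (position s1 ?y) = (p + int k) mod int (length s1)"
      using cnth_eq_iff_position[of s1 ?y "p + int k"] by simp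
    then have "nbrs s1 (int (position s1 ?y)) = nbrs s1 (p + int k)" by simp
    then have "cnth s1 (p + int k + 1) \<in># nbrs s1 (int (position s1 ?y))" by (simp add: nbrs_def)
    then show ?case using matched_nbr[OF Suc] by (simp add: ac_simps)
  qed
  obtain z where "p \<le> z" "cnth s1 z = x" using x by (rule cnth_in_window)
  then show ?thesis using walk[of "nat (z - p)"] by simp
qed

end

lemma double_ring_if_shared_edge:
  fixes s1 s2 :: "nat list"
  assumes "doubled_pair s1 s2" and e1: "e \<in># walk_edges s1" and e2: "e \<in># walk_edges s2"
  shows "double_ring (s1, s2)"
proof -
  interpret doubled_pair s1 s2 by (rule assms(1))
  interpret swapped: doubled_pair s2 s1 by (rule swap)
  obtain r y where e: "e = (r, y)" by (cases e)
  have "r \<in> set s1" "r \<in> set s2" using walk_edges_vertices[OF e1] walk_edges_vertices[OF e2] e by auto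
  then have cr: "count_list s1 r = 1" "count_list s2 r = 1" by (rule count_list_eq_1)+
  have "even (position s1 r) \<and> y \<in># nbrs s1 (int (position s1 r))"
    "even (position s2 r) \<and> y \<in># nbrs s2 (int (position s2 r))"
    using e1 e2 count_walk_edges_single[OF even_length(1) cr(1), of True y]
      count_walk_edges_single[OF even_length(2) cr(2), of True y]
    by (simp_all add: e orient_def split: if_splits flip: count_greater_zero_iff)
  then have m: "matched s1 s2 r" by (intro matchedI[OF cr, of y]) auto
  have "matched s1 s2 x" if "x \<in> set s1 \<union> set s2" for x
  proof (cases "x \<in> set s1")
    case True
    then show ?thesis using matched_along_first[OF m] by blast
  next
    case False
    then have "x \<in> set s2" using that by blast
    moreover have "matched s2 s1 r" using m by (simp add: matched_commute)
    ultimately show ?thesis using swapped.matched_along_first by (simp add: matched_commute)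
  qed
  moreover have "s2 \<noteq> []" using e2 by (auto simp: walk_edges_def)
  ultimately show ?thesis using double_ring_if_matched[OF even_length(1)] by blast
qed

text \<open>Walks visiting exactly half as many vertices as they have steps: the case
  #V = l of the theorem.\<close>

definition critical_pair :: "nat list \<times> nat list \<Rightarrow> bool" where
  "critical_pair p \<longleftrightarrow> even (length (fst p)) \<and> even (length (snd p)) \<and>
     2 * card (set (fst p) \<union> set (snd p)) = length (fst p) + length (snd p)"

lemma critical_pair_swap: "critical_pair (s1, s2) \<longleftrightarrow> critical_pair (s2, s1)"
  by (auto simp: critical_pair_def Un_commute add.commute)

lemma bal_leaf_if_private:
  assumes ev: "even (length w)" and c: "count_list w v = 1" and vu: "v \<notin> set u"
    and doubled: "\<And>e. e \<in># walk_edges w + walk_edges u \<Longrightarrow>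
                    2 \<le> count (walk_edges w + walk_edges u) e"
    and shared: "e0 \<in># walk_edges w" "e0 \<in># walk_edges u"
  shows "bal_leaf w v"
proof (cases "length w = 2")
  case True
  then have w: "w = [w ! 0, w ! 1]" by (rule length_2_conv)
  then have "walk_edges w = {#(w ! 0, w ! 1), (w ! 0, w ! 1)#}" by (metis walk_edges_two)
  then have "w ! 0 \<in> set u" "w ! 1 \<in> set u" using shared walk_edges_vertices by fastforce+
  moreover have "v \<in> set w" using c by (metis count_list_0_iff zero_neq_one)
  ultimately show ?thesis using vu w by (metis empty_iff insert_iff list.set)
next
  case False
  have "w \<noteq> []" using c by auto
  then have L: "length w > 2" using even_length_ge_2[OF ev] False by fastforce
  define t where "t = int (position w v)"
  define x where "x = cnth w (t + 1)"
  define b where "b = even (position w v)"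
  have cw: "count (walk_edges w) (orient b v x) = count (nbrs w t) x"
    using count_walk_edges_single[OF ev c, of b x] by (simp add: b_def t_def)
  have cu: "count (walk_edges u) (orient b v x) = 0"
    using walk_edges_vertices[of "orient b v x" u] vu by (cases b) (auto simp: orient_def count_eq_zero_iff)
  have "0 < count (nbrs w t) x" by (simp add: nbrs_def x_def)
  then have "orient b v x \<in># walk_edges w" using cw by (simp flip: count_greater_zero_iff)
  then have "2 \<le> count (nbrs w t) x" using doubled[of "orient b v x"] cw cu by simp
  then have "cnth w (t - 1) = cnth w (t + 1)" by (auto simp: nbrs_def x_def split: if_splits)
  then show ?thesis using L c by (simp add: bal_leaf_iff t_def)
qed

lemma doubled_pair_if_leafless:
  assumes crit: "critical_pair (s1, s2)" and no_leaf: "\<nexists>v. pair_leaf (s1, s2) v"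
    and doubled: "\<And>e. e \<in># walk_edges s1 + walk_edges s2 \<Longrightarrow>
                    2 \<le> count (walk_edges s1 + walk_edges s2) e"
    and shared: "e0 \<in># walk_edges s1" "e0 \<in># walk_edges s2"
  shows "doubled_pair s1 s2"
proof
  show ev: "even (length s1)" "even (length s2)" using crit by (simp_all add: critical_pair_def)
  show "2 \<le> count (walk_edges s1 + walk_edges s2) e" if "e \<in># walk_edges s1 + walk_edges s2" for e
    using doubled that .
  define U where "U = set s1 \<union> set s2"
  define f where "f v = count_list s1 v + count_list s2 v" for v
  have ge2: "2 \<le> f v" if v: "v \<in> U" for v
  proof (rule ccontr)
    assume "\<not> 2 \<le> f v"
    moreover have "v \<in> set s1 \<longleftrightarrow> count_list s1 v \<noteq> 0"
      and "v \<in> set s2 \<longleftrightarrow> count_list s2 v \<noteq> 0"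
      by (simp_all add: count_list_0_iff)
    ultimately consider "count_list s1 v = 1" "v \<notin> set s2" | "count_list s2 v = 1" "v \<notin> set s1"
      using v unfolding f_def U_def by fastforce
    then have "pair_leaf (s1, s2) v"
    proof cases
      case 1
      then show ?thesis using bal_leaf_if_private[OF ev(1) 1 doubled shared] by (simp add: pair_leaf_def)
    next
      case 2
      have "bal_leaf s2 v"
        using bal_leaf_if_private[OF ev(2) 2 _ shared(2,1)] doubled by (simp add: add.commute)
      then show ?thesis using 2 by (simp add: pair_leaf_def)
    qed
    then show False using no_leaf by blast
  qed
  have "sum f U = 2 * card U"
    using crit by (simp add: f_def U_def sum.distrib sum_count_set critical_pair_def)
  then have "sum (\<lambda>v. f v - 2) U = 0" using ge2 by (simp add: sum_subtractf_nat)
  then have "f v - 2 = 0" if "v \<in> U" for v using that by (simp add: U_def)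
  then show "f v = 2" if "v \<in> set s1 \<union> set s2" for v
    using ge2 that by (fastforce simp: U_def)
qed

lemma moment_cov_leafless:
  assumes crit: "critical_pair (s1, s2)" and no_leaf: "\<nexists>v. pair_leaf (s1, s2) v"
    and m: "\<mu> 1 = 0" "\<mu> 2 = 1"
  shows "moment_cov \<mu> (walk_edges s1) (walk_edges s2) = ring_value \<mu> (s1, s2)"
proof (cases "double_ring (s1, s2)")
  case True
  then show ?thesis using moment_cov_double_ring[OF m] by blast
next
  case False
  define F where "F = walk_edges s1"
  define G where "G = walk_edges s2"
  have "moment_cov \<mu> F G = 0"
  proof (cases "\<exists>e. count (F + G) e = 1")
    case True
    then obtain e where e: "count (F + G) e = 1" by blast
    then have "count F e = 1 \<or> count G e = 1" by simp arith
    then have "moment_prod \<mu> F = 0 \<or> moment_prod \<mu> G = 0"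
      using moment_prod_eq_0 m(1) by meson
    then show ?thesis using moment_prod_eq_0[of \<mu>, OF m(1) e] by (auto simp: moment_cov_def)
  next
    case no_single: False
    show ?thesis
    proof (cases "set_mset F \<inter> set_mset G = {}")
      case True
      then show ?thesis by (simp add: moment_cov_def moment_prod_union_disjoint)
    next
      case False
      then obtain e0 where "e0 \<in># F" "e0 \<in># G" by blast
      moreover have "2 \<le> count (F + G) e" if "e \<in># F + G" for e
      proof -
        have "0 < count (F + G) e" using that by (simp only: count_greater_zero_iff)
        moreover have "count (F + G) e \<noteq> 1" using no_single by blast
        ultimately show ?thesis by linarith
      qed
      ultimately have "doubled_pair s1 s2"
        using doubled_pair_if_leafless[OF crit no_leaf] by (simp add: F_def G_def)
      then have "double_ring (s1, s2)"
        using double_ring_if_shared_edge \<open>e0 \<in># F\<close> \<open>e0 \<in># G\<close> by (simp add: F_def G_def)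
      then show ?thesis using \<open>\<not> double_ring (s1, s2)\<close> by blast
    qed
  qed
  then show ?thesis using False ring_value_eq_0 by (simp add: F_def G_def)
qed

section \<open>The seed graph\<close>

lemma critical_pair_remove_leaf:
  assumes "critical_pair (s1, s2)" "bal_leaf s1 v" "v \<notin> set s2"
  shows "critical_pair (remove_leaf s1 v, s2)"
proof -
  have "v \<in> set s1" using bal_leafD(2)[OF assms(2)] by (metis count_list_0_iff zero_neq_one)
  moreover have "set (remove_leaf s1 v) \<union> set s2 = (set s1 \<union> set s2) - {v}"
    using assms(3) by (auto simp: set_remove_leaf[OF assms(2)])
  ultimately have "card (set (remove_leaf s1 v) \<union> set s2) = card (set s1 \<union> set s2) - 1" by simp
  moreover have "card (set s1 \<union> set s2) \<noteq> 0" using \<open>v \<in> set s1\<close> by auto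
  moreover have "length s1 > 2" using bal_leafD(1)[OF assms(2)] .
  ultimately show ?thesis
    using assms(1) length_remove_leaf[OF assms(2)] by (auto simp: critical_pair_def)
qed

lemma moment_cov_remove_leaf:
  assumes "even (length s1)" "bal_leaf s1 v" "v \<notin> set s2" "\<mu> 2 = 1"
  shows "moment_cov \<mu> (walk_edges s1) (walk_edges s2)
       = moment_cov \<mu> (walk_edges (remove_leaf s1 v)) (walk_edges s2)"
proof -
  define e where "e = step_edge s1 (int (position s1 v))"
  have "fst e = v \<or> snd e = v"
    using cnth_position[OF bal_leafD(2)[OF assms(2)]] by (simp add: e_def step_edge_def)
  then have "e \<notin># walk_edges (remove_leaf s1 v)" "e \<notin># walk_edges s2"
    using walk_edges_vertices[of e "remove_leaf s1 v"] walk_edges_vertices[of e s2]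
      set_remove_leaf[OF assms(2)] assms(3) by auto
  then show ?thesis
    using walk_edges_remove_leaf[OF assms(2,1)] moment_cov_add_pair assms(4) by (simp add: e_def)
qed

declare seed.simps [simp del]

theorem moment_cov_seed:
  assumes m: "\<mu> 1 = 0" "\<mu> 2 = 1"
  shows "critical_pair p \<Longrightarrow>
    moment_cov \<mu> (walk_edges (fst p)) (walk_edges (snd p)) = ring_value \<mu> (seed p)"
proof (induction p rule: seed.induct)
  case (1 p)
  obtain s1 s2 where p: "p = (s1, s2)" by (cases p)
  show ?case
  proof (cases "\<exists>v. pair_leaf p v")
    case leaf: True
    define v where "v = (LEAST v. pair_leaf p v)"
    have "pair_leaf p v" using leaf unfolding v_def by (metis LeastI)
    show ?thesis
    proof (cases "bal_leaf s1 v \<and> v \<notin> set s2")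
      case True
      then have "seed p = seed (remove_leaf s1 v, s2)"
        using leaf by (subst seed.simps) (simp add: p v_def Let_def)
      moreover have "critical_pair (remove_leaf s1 v, s2)"
        using critical_pair_remove_leaf "1.prems" True by (simp add: p)
      ultimately show ?thesis
        using "1.IH"(1)[OF leaf v_def] True moment_cov_remove_leaf[of s1 v s2 \<mu>] m(2) "1.prems"
        by (simp add: p critical_pair_def)
    next
      case False
      then have leaf2: "bal_leaf s2 v" "v \<notin> set s1"
        using \<open>pair_leaf p v\<close> by (auto simp: p pair_leaf_def)
      then have "seed p = seed (s1, remove_leaf s2 v)"
        using leaf False by (subst seed.simps) (auto simp: p v_def Let_def)
      moreover have "critical_pair (s1, remove_leaf s2 v)"
        using critical_pair_remove_leaf[of s2 s1 v] "1.prems" leaf2 critical_pair_swap by (simp add: p)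
      moreover have "moment_cov \<mu> (walk_edges s1) (walk_edges s2)
          = moment_cov \<mu> (walk_edges s1) (walk_edges (remove_leaf s2 v))"
        using moment_cov_remove_leaf[of s2 v s1 \<mu>] leaf2 m(2) "1.prems"
        by (simp add: p critical_pair_def moment_cov_commute[of \<mu> "walk_edges s1"])
      ultimately show ?thesis using "1.IH"(2)[OF leaf v_def] False by (simp add: p)
    qed
  next
    case False
    then have "seed p = p" by (subst seed.simps) auto
    then show ?thesis using moment_cov_leafless[of s1 s2 \<mu>] "1.prems" False m by (simp add: p)
  qed
qed

section \<open>Expectations of products of i.i.d. entries\<close>

lemma abs_power_le_1_plus_even_power:
  fixes y :: real
  assumes "n \<le> 2 * l"
  shows "\<bar>y\<bar> ^ n \<le> 1 + y ^ (2 * l)"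
proof (cases "\<bar>y\<bar> \<le> 1")
  case True
  then have "\<bar>y\<bar> ^ n \<le> 1" by (simp add: power_le_one)
  then show ?thesis by (simp add: power_mult add_increasing2)
next
  case False
  then have "\<bar>y\<bar> ^ n \<le> \<bar>y\<bar> ^ (2 * l)" using assms by (intro power_increasing) auto
  then show ?thesis by (simp add: power_even_abs)
qed

lemma integrable_power_le:
  assumes "finite_measure M" "X \<in> borel_measurable M"
    and "integrable M (\<lambda>x. X x ^ (2 * l))" "n \<le> 2 * l"
  shows "integrable M (\<lambda>x. (X x :: real) ^ n)"
proof (rule Bochner_Integration.integrable_bound)
  interpret finite_measure M by (rule assms(1))
  show "integrable M (\<lambda>x. 1 + X x ^ (2 * l))" using assms(3) by simp
  show "(\<lambda>x. X x ^ n) \<in> borel_measurable M" using assms(2) by simp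
  have "0 \<le> X x ^ (2 * l)" for x by (simp add: power_mult)
  then show "AE x in M. norm (X x ^ n) \<le> norm (1 + X x ^ (2 * l))"
    using abs_power_le_1_plus_even_power[OF assms(4)] by (simp add: power_abs)
qed

lemma
  assumes "X \<in> borel_measurable M" "X' \<in> borel_measurable M"
    and "distr M borel X = distr M borel X'" "(g :: real \<Rightarrow> real) \<in> borel_measurable borel"
  shows integrable_eq_if_distr_eq: "integrable M (\<lambda>x. g (X x)) \<longleftrightarrow> integrable M (\<lambda>x. g (X' x))"
    and integral_eq_if_distr_eq: "integral\<^sup>L M (\<lambda>x. g (X x)) = integral\<^sup>L M (\<lambda>x. g (X' x))"
  using assms integrable_distr_eq[of X M borel g] integrable_distr_eq[of X' M borel g]
    integral_distr[of X M borel g] integral_distr[of X' M borel g] by simp_all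

lemma integral_prod_mset_iid:
  fixes X :: "'i \<Rightarrow> 'a \<Rightarrow> real"
  assumes P: "prob_space M" and meas: "\<And>i. i \<in> I \<Longrightarrow> X i \<in> borel_measurable M"
    and ind: "prob_space.indep_vars M (\<lambda>_. borel) X I"
    and X0: "X0 \<in> borel_measurable M"
    and D: "\<And>i. i \<in> I \<Longrightarrow> distr M borel (X i) = distr M borel X0"
    and mom: "integrable M (\<lambda>x. X0 x ^ N)" "even N"
    and F: "set_mset F \<subseteq> I" "size F \<le> N"
  shows "integral\<^sup>L M (\<lambda>\<omega>. \<Prod>i\<in>#F. X i \<omega>) = moment_prod (\<lambda>n. integral\<^sup>L M (\<lambda>x. X0 x ^ n)) F"
proof -
  define Z where "Z = (\<lambda>i \<omega>. X i \<omega> ^ count F i)"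
  have "prob_space.indep_vars M (\<lambda>_. borel) X (set_mset F)"
    using prob_space.indep_vars_subset[OF P ind F(1)] .
  then have indZ: "prob_space.indep_vars M (\<lambda>_. borel) Z (set_mset F)"
    unfolding Z_def by (rule prob_space.indep_vars_compose2[OF P]) simp
  have Z: "integrable M (Z i) \<and> integral\<^sup>L M (Z i) = integral\<^sup>L M (\<lambda>x. X0 x ^ count F i)"
    if i: "i \<in># F" for i
  proof -
    have "count F i \<le> N" using F(2) count_le_size[of F i] by simp
    then have "integrable M (\<lambda>x. X0 x ^ count F i)"
      using integrable_power_le[OF prob_space.finite_measure[OF P] X0] mom by (metis evenE)
    moreover have iI: "i \<in> I" using i F(1) by blast
    ultimately show ?thesis
      using integrable_eq_if_distr_eq[OF meas[OF iI] X0 D[OF iI], of "\<lambda>y. y ^ count F i"]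
        integral_eq_if_distr_eq[OF meas[OF iI] X0 D[OF iI], of "\<lambda>y. y ^ count F i"]
      by (simp add: Z_def)
  qed
  have "integral\<^sup>L M (\<lambda>\<omega>. \<Prod>i\<in>#F. X i \<omega>) = integral\<^sup>L M (\<lambda>\<omega>. \<Prod>i\<in>set_mset F. Z i \<omega>)"
    by (simp add: image_prod_mset_multiplicity Z_def)
  also have "\<dots> = (\<Prod>i\<in>set_mset F. integral\<^sup>L M (Z i))"
    using prob_space.indep_vars_lebesgue_integral[OF P _ indZ] Z by simp
  also have "\<dots> = moment_prod (\<lambda>n. integral\<^sup>L M (\<lambda>x. X0 x ^ n)) F"
    unfolding moment_prod_def using Z by (intro prod.cong) auto
  finally show ?thesis .
qed

lemma length_interleave: "length xs = length ys \<Longrightarrow> length (interleave xs ys) = 2 * length xs"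
  by (induction xs ys rule: list_induct2) (simp_all add: interleave_def)

lemma set_interleave: "length xs = length ys \<Longrightarrow> set (interleave xs ys) = set xs \<union> set ys"
  by (induction xs ys rule: list_induct2) (auto simp: interleave_def)

lemma nth_interleave:
  assumes "length xs = length ys" "a < length xs"
  shows "interleave xs ys ! (2 * a) = xs ! a \<and> interleave xs ys ! (2 * a + 1) = ys ! a"
  using assms
proof (induction xs ys arbitrary: a rule: list_induct2)
  case (Cons x xs y ys)
  then show ?case by (cases a) (simp_all add: interleave_def)
qed simp

lemma cyc_prod_eq_prod_walk_edges:
  assumes "length xs = length ks"
  shows "cyc_prod Y xs ks \<omega> = (\<Prod>e\<in>#walk_edges (interleave xs ks). Y (fst e) (snd e) \<omega>)"
proof -
  define n where "n = length xs"
  define w where "w = interleave xs ks"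
  have len: "length w = 2 * n" using length_interleave[OF assms] by (simp add: w_def n_def)
  have "(\<Prod>e\<in>#walk_edges w. Y (fst e) (snd e) \<omega>)
      = (\<Prod>q<2 * n. Y (fst (step_edge w (int q))) (snd (step_edge w (int q))) \<omega>)"
    by (simp add: walk_edges_def len prod_mset_prod_list prod.distinct_set_conv_list[symmetric]
        atLeast0LessThan flip: mset_map)
  also have "\<dots> = (\<Prod>a<n. Y (fst (step_edge w (int (2 * a)))) (snd (step_edge w (int (2 * a)))) \<omega> *
                           Y (fst (step_edge w (int (2 * a + 1)))) (snd (step_edge w (int (2 * a + 1)))) \<omega>)"
    by (induction n) (simp_all add: ac_simps)
  also have "\<dots> = cyc_prod Y xs ks \<omega>"
    unfolding cyc_prod_def n_def[symmetric]
  proof (rule prod.cong[OF refl])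
    fix a assume "a \<in> {..<n}"
    then have a: "a < n" by simp
    have "cnth w (int (2 * a)) = xs ! a" "cnth w (int (2 * a) + 1) = ks ! a"
      using a len nth_interleave[OF assms, of a] cnth_of_nat_less[of "2 * a" w]
        cnth_of_nat_less[of "2 * a + 1" w] by (simp_all add: w_def n_def add.commute)
    moreover have "cnth w (int (2 * a) + 2) = xs ! ((a + 1) mod n)"
    proof -
      have "(2 * a + 2) mod (2 * n) = 2 * ((a + 1) mod n)" by (simp add: mult_mod_right)
      moreover have "(a + 1) mod n < n" using a by simp
      ultimately show ?thesis
        using len nth_interleave[OF assms, of "(a + 1) mod n"] cnth_of_nat[of w "2 * a + 2"]
        by (simp add: w_def n_def add.commute)
    qed
    ultimately show "Y (fst (step_edge w (int (2 * a)))) (snd (step_edge w (int (2 * a)))) \<omega> *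
          Y (fst (step_edge w (int (2 * a + 1)))) (snd (step_edge w (int (2 * a + 1)))) \<omega> =
          Y (xs ! a) (ks ! a) \<omega> * Y (xs ! ((a + 1) mod n)) (ks ! a) \<omega>"
      by (simp add: step_edge_def ac_simps)
  qed
  finally show ?thesis by (simp add: w_def)
qed

lemma covariance_cyc_prod:
  fixes Y :: "nat \<Rightarrow> nat \<Rightarrow> 'a \<Rightarrow> real"
  assumes P: "prob_space M"
    and meas: "\<And>a b. a \<ge> 1 \<Longrightarrow> b \<ge> 1 \<Longrightarrow> Y a b \<in> borel_measurable M"
    and ind: "prob_space.indep_vars M (\<lambda>_. borel) (\<lambda>(a, b). Y a b) {(a, b). a \<ge> 1 \<and> b \<ge> 1}"
    and D: "\<And>a b. a \<ge> 1 \<Longrightarrow> b \<ge> 1 \<Longrightarrow> distr M borel (Y a b) = distr M borel (Y 1 1)"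
    and mom: "integrable M (\<lambda>x. Y 1 1 x ^ (2 * (length i + length j)))"
    and len: "length k = length i" "length m = length j"
    and pos: "0 \<notin> set i \<union> set k \<union> set j \<union> set m"
  shows "integral\<^sup>L M (\<lambda>x. cyc_prod Y i k x * cyc_prod Y j m x)
           - integral\<^sup>L M (cyc_prod Y i k) * integral\<^sup>L M (cyc_prod Y j m)
         = moment_cov (\<lambda>n. integral\<^sup>L M (\<lambda>x. Y 1 1 x ^ n))
             (walk_edges (interleave i k)) (walk_edges (interleave j m))"
proof -
  define F where "F = walk_edges (interleave i k)"
  define G where "G = walk_edges (interleave j m)"
  have E: "integral\<^sup>L M (\<lambda>\<omega>. \<Prod>e\<in>#H. Y (fst e) (snd e) \<omega>)
      = moment_prod (\<lambda>n. integral\<^sup>L M (\<lambda>x. Y 1 1 x ^ n)) H" if "H \<subseteq># F + G" for H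
  proof -
    have H_entries: "set_mset H \<subseteq> {(a, b). a \<ge> 1 \<and> b \<ge> 1}"
    proof
      fix e assume "e \<in># H"
      then have "e \<in># F + G" using mset_subset_eqD[OF that] by blast
      then have "fst e \<in> set i \<union> set k \<union> set j \<union> set m \<and>
                 snd e \<in> set i \<union> set k \<union> set j \<union> set m"
        using walk_edges_vertices[of e "interleave i k"] walk_edges_vertices[of e "interleave j m"] len
        by (auto simp: F_def G_def set_interleave)
      then show "e \<in> {(a, b). a \<ge> 1 \<and> b \<ge> 1}" using pos by (cases e) (auto intro!: Suc_leI gr0I)
    qed
    have H_size: "size H \<le> 2 * (length i + length j)"
      using size_mset_mono[OF that] len by (simp add: F_def G_def length_interleave)
    have "integral\<^sup>L M (\<lambda>\<omega>. \<Prod>e\<in>#H. (\<lambda>(a, b). Y a b) e \<omega>)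
        = moment_prod (\<lambda>n. integral\<^sup>L M (\<lambda>x. Y 1 1 x ^ n)) H"
    proof (rule integral_prod_mset_iid[OF P _ ind _ _ mom _ H_entries H_size])
      fix e :: "nat \<times> nat" assume "e \<in> {(a, b). a \<ge> 1 \<and> b \<ge> 1}"
      then obtain a b where e: "e = (a, b)" "a \<ge> 1" "b \<ge> 1" by (cases e) auto
      show "(\<lambda>(a, b). Y a b) e \<in> borel_measurable M" using meas[OF e(2,3)] by (simp add: e(1))
      show "distr M borel ((\<lambda>(a, b). Y a b) e) = distr M borel (Y 1 1)"
        using D[OF e(2,3)] by (simp add: e(1))
    qed (use meas in simp_all)
    then show ?thesis by (simp add: case_prod_unfold)
  qed
  have "cyc_prod Y i k = (\<lambda>\<omega>. \<Prod>e\<in>#F. Y (fst e) (snd e) \<omega>)"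
       "cyc_prod Y j m = (\<lambda>\<omega>. \<Prod>e\<in>#G. Y (fst e) (snd e) \<omega>)"
    using cyc_prod_eq_prod_walk_edges[of i k Y] cyc_prod_eq_prod_walk_edges[of j m Y] len
    by (simp_all add: F_def G_def fun_eq_iff)
  then show ?thesis using E[of "F + G"] E[of F] E[of G]
    by (simp add: moment_cov_def F_def G_def)
qed

theorem proposition7p5:
  fixes M :: "'a measure" and Y :: "nat \<Rightarrow> nat \<Rightarrow> 'a \<Rightarrow> real"
    and l1 l2 :: nat and V :: "nat set" and i k j m :: "nat list"
  assumes "prob_space M"
    and "\<And>a b. a \<ge> 1 \<Longrightarrow> b \<ge> 1 \<Longrightarrow> Y a b \<in> borel_measurable M"
    and "prob_space.indep_vars M (\<lambda>_. borel) (\<lambda>(a, b). Y a b) {(a, b). a \<ge> 1 \<and> b \<ge> 1}"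
    and "\<And>a b. a \<ge> 1 \<Longrightarrow> b \<ge> 1 \<Longrightarrow> distr M borel (Y a b) = distr M borel (Y 1 1)"
    and "integrable M (Y 1 1)" and "integral\<^sup>L M (Y 1 1) = 0"
    and "integrable M (\<lambda>x. Y 1 1 x ^ 2)" and "integral\<^sup>L M (\<lambda>x. Y 1 1 x ^ 2) = 1"
    and "integrable M (\<lambda>x. Y 1 1 x ^ (2 * (l1 + l2)))"
    and "l1 \<ge> 1" and "l2 \<ge> 1"
    and "finite V" and "card V = l1 + l2" and "0 \<notin> V"
    and "length i = l1" and "length k = l1" and "length j = l2" and "length m = l2"
    and "set i \<subseteq> V" and "set k \<subseteq> V" and "set j \<subseteq> V" and "set m \<subseteq> V"
    and "card (set i \<union> set k \<union> set j \<union> set m) \<ge> l1 + l2"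
  shows "integral\<^sup>L M (\<lambda>x. cyc_prod Y i k x * cyc_prod Y j m x)
           - integral\<^sup>L M (cyc_prod Y i k) * integral\<^sup>L M (cyc_prod Y j m)
         = (if card (set i \<union> set k \<union> set j \<union> set m) > l1 + l2 then 0
            else if double_2_ring 2 (seed (interleave i k, interleave j m))
              then integral\<^sup>L M (\<lambda>x. Y 1 1 x ^ 4) - 1
            else if \<exists>l0. even l0 \<and> l0 \<ge> 4 \<and> double_1_ring l0 (seed (interleave i k, interleave j m))
              then 1
            else if \<exists>l0. even l0 \<and> l0 \<ge> 4 \<and> double_2_ring l0 (seed (interleave i k, interleave j m))
              then 1
            else 0)"
proof -
  define \<mu> where "\<mu> = (\<lambda>n. integral\<^sup>L M (\<lambda>x. Y 1 1 x ^ n))"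
  \<comment> \<open>All vertices lie in V, so the first case of the claim never occurs.\<close>
  have card: "card (set i \<union> set k \<union> set j \<union> set m) = l1 + l2"
    using card_mono[OF assms(12), of "set i \<union> set k \<union> set j \<union> set m"] assms(13,19-23) by simp
  have crit: "critical_pair (interleave i k, interleave j m)"
    using card assms(15-18) by (simp add: critical_pair_def length_interleave set_interleave Un_assoc)
  have m: "\<mu> 1 = 0" "\<mu> 2 = 1" using assms(6,8) by (simp_all add: \<mu>_def)
  have "integral\<^sup>L M (\<lambda>x. cyc_prod Y i k x * cyc_prod Y j m x)
           - integral\<^sup>L M (cyc_prod Y i k) * integral\<^sup>L M (cyc_prod Y j m)
         = moment_cov \<mu> (walk_edges (interleave i k)) (walk_edges (interleave j m))"
    unfolding \<mu>_def
  proof (rule covariance_cyc_prod[OF assms(1-4)])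
    show "integrable M (\<lambda>x. Y 1 1 x ^ (2 * (length i + length j)))" using assms(9,15,17) by simp
    show "length k = length i" "length m = length j" using assms(15-18) by simp_all
    show "0 \<notin> set i \<union> set k \<union> set j \<union> set m" using assms(14,19-22) by blast
  qed
  also have "\<dots> = ring_value \<mu> (seed (interleave i k, interleave j m))"
    using moment_cov_seed[OF m crit] by simp
  finally show ?thesis using card by (simp add: ring_value_def \<mu>_def)
qed

end
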